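(* Let $(\mathcal{X},c)$ be a metric space with diameter at most $1$, let $\mu,\tilde\mu$ be probability distributions on $\mathcal{X}$, let $p\ge1$, $k>0$, and let $\alpha\in(0,1)$ be a constant. Let $\delta=\|\mu-\tilde\mu\|_{\mathrm{TV}}$. Then $$\min\left\{\delta(1-\alpha),\tfrac1k W_{p,1-\delta(1-\alpha)}(\mu,\tilde\mu)\right\}\le\mathrm{RPW}_{p,k}(\mu,\tilde\mu)\le\min\left\{\delta,\tfrac1kW_p(\mu,\tilde\mu)\right\}.$$
   Context: $c(x,y)\le1$ for all $x,y$; distributions are Borel probability measures. $\|\mu-\nu\|_{\mathrm{TV}}=\sup_A|\mu(A)-\nu(A)|$. For $p\in[1,\infty)$ and $\beta\in[0,1]$, a partial transport plan of mass $\beta$ between $\mu,\nu$ is a nonnegative measure $\gamma$ on $\mathcal{X}\times\mathcal{X}$ of total mass $\beta$ with first marginal $\le\mu$ and second marginal $\le\nu$ (setwise); its cost is $w_p(\gamma)=(\int c^p\,d\gamma)^{1/p}$, and $W_{p,\beta}(\mu,\nu)$ is the infimum of $w_p(\gamma)$ over such $\gamma$; $W_p=W_{p,1}$. For $k\ge0$, $\mathrm{RPW}_{p,k}(\mu,\nu)=\inf\{\varepsilon\in[0,1]: W_{p,1-\varepsilon}(\mu,\nu)\le k\varepsilon\}$. *)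

theory Defs
  imports "HOL-Probability.Probability"
begin

definition borel_prob :: "'a::metric_space measure \<Rightarrow> bool" where
  "borel_prob M \<longleftrightarrow> prob_space M \<and> sets M = sets borel"

definition tv_dist :: "'a::metric_space measure \<Rightarrow> 'a measure \<Rightarrow> real" where
  "tv_dist \<mu> \<nu> = Sup {\<bar>measure \<mu> A - measure \<nu> A\<bar> | A. A \<in> sets borel}"

definition partial_plan ::
  "'a::metric_space measure \<Rightarrow> 'a measure \<Rightarrow> real \<Rightarrow> ('a \<times> 'a) measure \<Rightarrow> bool" where
  "partial_plan \<mu> \<nu> \<beta> \<gamma> \<longleftrightarrow>
     sets \<gamma> = sets borel \<and> emeasure \<gamma> (space \<gamma>) = ennreal \<beta> \<and>
     (\<forall>A \<in> sets borel. emeasure \<gamma> (A \<times> UNIV) \<le> emeasure \<mu> A) \<and>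
     (\<forall>B \<in> sets borel. emeasure \<gamma> (UNIV \<times> B) \<le> emeasure \<nu> B)"

definition plan_cost :: "real \<Rightarrow> ('a::metric_space \<times> 'a) measure \<Rightarrow> ereal" where
  "plan_cost p \<gamma> = ereal (enn2real (\<integral>\<^sup>+ z. ennreal (dist (fst z) (snd z) powr p) \<partial>\<gamma>) powr (1 / p))"

text \<open>Partial Wasserstein distance W_{p,beta} (infimum over plans; +infinity if none).\<close>
definition W_partial :: "real \<Rightarrow> real \<Rightarrow> 'a::metric_space measure \<Rightarrow> 'a measure \<Rightarrow> ereal" where
  "W_partial p \<beta> \<mu> \<nu> = (INF \<gamma> \<in> {\<gamma>. partial_plan \<mu> \<nu> \<beta> \<gamma>}. plan_cost p \<gamma>)"

definition W_p :: "real \<Rightarrow> 'a::metric_space measure \<Rightarrow> 'a measure \<Rightarrow> ereal" where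
  "W_p p \<mu> \<nu> = W_partial p 1 \<mu> \<nu>"

definition RPW :: "real \<Rightarrow> real \<Rightarrow> 'a::metric_space measure \<Rightarrow> 'a measure \<Rightarrow> real" where
  "RPW p k \<mu> \<nu> = Inf {\<epsilon> \<in> {0..1}. W_partial p (1 - \<epsilon>) \<mu> \<nu> \<le> ereal (k * \<epsilon>)}"

end

theory Submission
  imports Defs
begin

(* The upper bounds exhibit feasible levels eps. Scaling a plan down lowers both its mass
   and its cost, so W_{p,beta} is nondecreasing in beta and eps = W_p / k is feasible whenever
   it is at most 1. For eps = TV, a Hahn decomposition Y of mu - nu yields the common minorant
   A |-> mu (A - Y) + nu (A \<inter> Y) of mass 1 - (mu Y - nu Y) >= 1 - TV, and its diagonal
   coupling is a partial plan of cost zero.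
   The lower bound holds with any a in [0,1] in place of TV (1 - alpha): if RPW < a, every
   feasible eps < a gives W_{p,1-a} <= W_{p,1-eps} <= k eps, so W_{p,1-a} / k <= RPW. *)

definition add_measure :: "'a measure \<Rightarrow> 'a measure \<Rightarrow> 'a measure" where
  "add_measure M N = measure_of (space M) (sets M) (\<lambda>A. emeasure M A + emeasure N A)"

lemma sets_add_measure [simp]: "sets (add_measure M N) = sets M"
  by (simp add: add_measure_def sets.sigma_sets_eq)

lemma emeasure_add_measure:
  assumes "sets N = sets M" and "A \<in> sets M"
  shows "emeasure (add_measure M N) A = emeasure M A + emeasure N A"
  unfolding add_measure_def
proof (rule emeasure_measure_of_sigma[OF sets.sigma_algebra_axioms _ _ assms(2)])
  show "positive (sets M) (\<lambda>A. emeasure M A + emeasure N A)"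
    by (simp add: positive_def)
  show "countably_additive (sets M) (\<lambda>A. emeasure M A + emeasure N A)"
  proof (rule countably_additiveI)
    fix A :: "nat \<Rightarrow> 'a set"
    assume "range A \<subseteq> sets M" "disjoint_family A"
    then show "(\<Sum>i. emeasure M (A i) + emeasure N (A i)) = emeasure M (\<Union>i. A i) + emeasure N (\<Union>i. A i)"
      using assms(1) by (simp add: suminf_add[symmetric] suminf_emeasure)
  qed
qed

lemma finite_measure_common_minorant:
  assumes "finite_measure M" "finite_measure N" and sets_N: "sets N = sets M"
  obtains m Y where "sets m = sets M" "Y \<in> sets M"
    "\<And>A. emeasure m A \<le> emeasure M A" "\<And>A. emeasure m A \<le> emeasure N A"
    "emeasure m (space M) = emeasure M (space M - Y) + emeasure N Y"
proof -
  obtain Y where Y: "Y \<in> sets M"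
    and N_le_M: "\<forall>X\<in>sets M. X \<subseteq> Y \<longrightarrow> N X \<le> M X"
    and M_le_N: "\<forall>X\<in>sets M. X \<inter> Y = {} \<longrightarrow> M X \<le> N X"
    using finite_unsigned_Hahn_decomposition[OF assms] by blast
  define m where "m = add_measure (density M (indicator (space M - Y))) (density N (indicator Y))"
  have sets_m: "sets m = sets M"
    by (simp add: m_def)
  have emeasure_m: "emeasure m A = emeasure M ((space M - Y) \<inter> A) + emeasure N (Y \<inter> A)"
    if "A \<in> sets M" for A
    using that Y sets_N by (simp add: m_def emeasure_add_measure emeasure_restricted)
  have split_M: "emeasure M ((space M - Y) \<inter> A) + emeasure M (Y \<inter> A) = emeasure M A"
    and split_N: "emeasure N ((space M - Y) \<inter> A) + emeasure N (Y \<inter> A) = emeasure N A"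
    if "A \<in> sets M" for A
    using that Y sets_N sets.sets_into_space[OF that]
    by (subst plus_emeasure; force intro!: arg_cong[where f="emeasure _"])+
  show ?thesis
  proof
    show "emeasure m A \<le> emeasure M A" for A
    proof (cases "A \<in> sets M")
      case True
      then have "emeasure m A \<le> emeasure M ((space M - Y) \<inter> A) + emeasure M (Y \<inter> A)"
        using Y N_le_M by (simp add: emeasure_m add_left_mono)
      then show ?thesis using split_M[OF True] by simp
    qed (simp add: emeasure_notin_sets sets_m)
    show "emeasure m A \<le> emeasure N A" for A
    proof (cases "A \<in> sets M")
      case True
      have "emeasure M ((space M - Y) \<inter> A) \<le> emeasure N ((space M - Y) \<inter> A)"
        using M_le_N True Y by (auto simp: Diff_Int_distrib2)
      then have "emeasure m A \<le> emeasure N ((space M - Y) \<inter> A) + emeasure N (Y \<inter> A)"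
        using True by (simp add: emeasure_m add_right_mono)
      then show ?thesis using split_N[OF True] by simp
    qed (simp add: emeasure_notin_sets sets_m sets_N)
    show "emeasure m (space M) = emeasure M (space M - Y) + emeasure N Y"
      using Y sets.sets_into_space[OF Y] by (simp add: emeasure_m Int_absorb1 Int_absorb2)
  qed (use sets_m Y in auto)
qed

lemma
  assumes "borel_prob \<mu>" "borel_prob \<nu>"
  shows measure_diff_le_tv_dist:
      "A \<in> sets borel \<Longrightarrow> \<bar>measure \<mu> A - measure \<nu> A\<bar> \<le> tv_dist \<mu> \<nu>"
    and tv_dist_nonneg: "0 \<le> tv_dist \<mu> \<nu>"
    and tv_dist_le_1: "tv_dist \<mu> \<nu> \<le> 1"
proof -
  interpret \<mu>: prob_space \<mu> using assms(1) by (simp add: borel_prob_def)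
  interpret \<nu>: prob_space \<nu> using assms(2) by (simp add: borel_prob_def)
  have le_1: "\<bar>measure \<mu> A - measure \<nu> A\<bar> \<le> 1" for A
    using \<mu>.prob_le_1[of A] \<nu>.prob_le_1[of A] measure_nonneg[of \<mu> A] measure_nonneg[of \<nu> A]
    by linarith
  then have "bdd_above {\<bar>measure \<mu> A - measure \<nu> A\<bar> | A. A \<in> sets borel}"
    by (intro bdd_aboveI[where M=1]) blast
  then show le_tv: "A \<in> sets borel \<Longrightarrow> \<bar>measure \<mu> A - measure \<nu> A\<bar> \<le> tv_dist \<mu> \<nu>" for A
    unfolding tv_dist_def by (rule cSup_upper[rotated]) blast
  show "0 \<le> tv_dist \<mu> \<nu>"
    using le_tv[of "{}"] by simp
  show "tv_dist \<mu> \<nu> \<le> 1"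
    unfolding tv_dist_def by (rule cSup_least) (use le_1 in blast)+
qed

lemma borel_prob_common_minorant:
  fixes \<mu> \<nu> :: "'a::metric_space measure"
  assumes "borel_prob \<mu>" "borel_prob \<nu>"
  obtains m d where "sets m = sets borel"
    "\<And>A. emeasure m A \<le> emeasure \<mu> A" "\<And>A. emeasure m A \<le> emeasure \<nu> A"
    "emeasure m UNIV = ennreal (1 - d)" "d \<le> tv_dist \<mu> \<nu>"
proof -
  interpret \<mu>: prob_space \<mu> using assms(1) by (simp add: borel_prob_def)
  interpret \<nu>: prob_space \<nu> using assms(2) by (simp add: borel_prob_def)
  have sets_\<mu>: "sets \<mu> = sets borel" and sets_\<nu>: "sets \<nu> = sets \<mu>"
    using assms by (simp_all add: borel_prob_def)
  have space_\<mu>: "space \<mu> = UNIV"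
    using sets_eq_imp_space_eq[OF sets_\<mu>] by simp
  obtain m Y where m: "sets m = sets \<mu>" "Y \<in> sets \<mu>"
      "\<And>A. emeasure m A \<le> emeasure \<mu> A" "\<And>A. emeasure m A \<le> emeasure \<nu> A"
    and mass: "emeasure m UNIV = emeasure \<mu> (UNIV - Y) + emeasure \<nu> Y"
    using finite_measure_common_minorant[OF \<mu>.finite_measure_axioms \<nu>.finite_measure_axioms sets_\<nu>]
    unfolding space_\<mu> by blast
  have "emeasure m UNIV = ennreal (1 - (measure \<mu> Y - measure \<nu> Y))"
    using m(2) sets_\<nu> space_\<mu> \<mu>.prob_compl[of Y]
    by (simp add: mass \<mu>.emeasure_eq_measure \<nu>.emeasure_eq_measure ennreal_plus[symmetric]
        del: ennreal_plus, simp add: algebra_simps)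
  moreover have "measure \<mu> Y - measure \<nu> Y \<le> tv_dist \<mu> \<nu>"
    using measure_diff_le_tv_dist[OF assms, of Y] m(2) sets_\<mu> by simp
  ultimately show ?thesis
    using that m sets_\<mu> by simp
qed

lemma borel_measurable_dist_powr:
  "(\<lambda>z::'a::metric_space \<times> 'a. ennreal (dist (fst z) (snd z) powr p)) \<in> borel_measurable borel"
proof -
  have "(\<lambda>z::'a \<times> 'a. dist (fst z) (snd z)) \<in> borel_measurable borel"
    by (intro borel_measurable_continuous_onI continuous_intros)
  then show ?thesis by measurable
qed

lemma
  fixes m :: "'a::metric_space measure"
  assumes sets_m: "sets m = sets borel"
  shows partial_plan_diagonal:
      "\<lbrakk>\<And>A. emeasure m A \<le> emeasure \<mu> A; \<And>A. emeasure m A \<le> emeasure \<nu> A;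
        emeasure m UNIV = ennreal \<beta>\<rbrakk>
       \<Longrightarrow> partial_plan \<mu> \<nu> \<beta> (distr m borel (\<lambda>x. (x, x)))"
    and plan_cost_diagonal: "plan_cost p (distr m borel (\<lambda>x. (x, x))) = 0"
proof -
  have space_m: "space m = UNIV"
    using sets_eq_imp_space_eq[OF sets_m] by simp
  have diag: "(\<lambda>x::'a. (x, x)) \<in> measurable m borel"
    unfolding measurable_cong_sets[OF sets_m refl]
    by (intro borel_measurable_continuous_onI continuous_intros)
  have emeasure_diag: "emeasure (distr m borel (\<lambda>x. (x, x))) (A \<times> B) = emeasure m (A \<inter> B)"
    if "A \<times> B \<in> sets borel" for A B
    using that diag space_m by (simp add: emeasure_distr vimage_def Int_def)
  show "partial_plan \<mu> \<nu> \<beta> (distr m borel (\<lambda>x. (x, x)))"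
    if le_\<mu>: "\<And>A. emeasure m A \<le> emeasure \<mu> A" and le_\<nu>: "\<And>A. emeasure m A \<le> emeasure \<nu> A"
      and mass: "emeasure m UNIV = ennreal \<beta>"
    unfolding partial_plan_def
  proof (intro conjI ballI)
    show "emeasure (distr m borel (\<lambda>x. (x, x))) (A \<times> UNIV) \<le> emeasure \<mu> A" for A
      using emeasure_diag[of A UNIV] le_\<mu>[of A] emeasure_notin_sets[of "A \<times> (UNIV :: 'a set)"]
      by fastforce
    show "emeasure (distr m borel (\<lambda>x. (x, x))) (UNIV \<times> A) \<le> emeasure \<nu> A" for A
      using emeasure_diag[of UNIV A] le_\<nu>[of A] emeasure_notin_sets[of "(UNIV :: 'a set) \<times> A"]
      by fastforce
  qed (use emeasure_diag[of UNIV UNIV] mass in auto)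
  have "(\<integral>\<^sup>+ z. ennreal (dist (fst z) (snd z) powr p) \<partial>distr m borel (\<lambda>x. (x, x))) = 0"
    by (subst nn_integral_distr[OF diag])
      (simp_all only: measurable_cong_sets[OF sets_distr refl] borel_measurable_dist_powr, simp)
  then show "plan_cost p (distr m borel (\<lambda>x. (x, x))) = 0"
    by (simp add: plan_cost_def)
qed

lemma partial_plan_scale:
  assumes plan: "partial_plan \<mu> \<nu> \<beta> \<gamma>" and r: "0 \<le> r" "r \<le> 1"
  shows "partial_plan \<mu> \<nu> (r * \<beta>) (scale_measure (ennreal r) \<gamma>)"
  unfolding partial_plan_def
proof (intro conjI ballI)
  have shrink: "ennreal r * x \<le> x" for x :: ennreal
    using mult_right_mono[of "ennreal r" 1 x] r by (simp add: ennreal_le_1)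
  show "emeasure (scale_measure (ennreal r) \<gamma>) (A \<times> UNIV) \<le> emeasure \<mu> A" if "A \<in> sets borel" for A
    using plan that shrink order_trans by (fastforce simp: partial_plan_def)
  show "emeasure (scale_measure (ennreal r) \<gamma>) (UNIV \<times> A) \<le> emeasure \<nu> A" if "A \<in> sets borel" for A
    using plan that shrink order_trans by (fastforce simp: partial_plan_def)
qed (use plan r in \<open>auto simp: partial_plan_def space_scale_measure ennreal_mult'\<close>)

lemma plan_cost_scale:
  assumes "sets \<gamma> = sets borel" and "p > 0" and "0 \<le> r" "r \<le> 1"
  shows "plan_cost p (scale_measure (ennreal r) \<gamma>) \<le> plan_cost p \<gamma>"
proof -
  let ?I = "\<lambda>\<gamma>. enn2real (\<integral>\<^sup>+ z. ennreal (dist (fst z) (snd z) powr p) \<partial>\<gamma>)"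
  have "(\<lambda>z. ennreal (dist (fst z) (snd z) powr p)) \<in> borel_measurable \<gamma>"
    using borel_measurable_dist_powr by (simp only: measurable_cong_sets[OF assms(1) refl])
  then have "?I (scale_measure (ennreal r) \<gamma>) = r * ?I \<gamma>"
    using assms(3) by (simp add: nn_integral_scale_measure enn2real_mult)
  also have "\<dots> \<le> ?I \<gamma>"
    using assms(3,4) mult_right_mono[of r 1] by simp
  finally show ?thesis
    using assms(2) by (auto simp: plan_cost_def intro!: powr_mono2)
qed

lemma W_partial_le_plan_cost: "partial_plan \<mu> \<nu> \<beta> \<gamma> \<Longrightarrow> W_partial p \<beta> \<mu> \<nu> \<le> plan_cost p \<gamma>"
  unfolding W_partial_def by (rule INF_lower) simp

lemma W_partial_nonneg: "0 \<le> W_partial p \<beta> \<mu> \<nu>"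
  unfolding W_partial_def plan_cost_def by (rule INF_greatest) simp

lemma W_partial_zero: "W_partial p 0 (\<mu> :: 'a::metric_space measure) \<nu> = 0"
proof -
  have "partial_plan \<mu> \<nu> 0 (null_measure (borel :: ('a \<times> 'a) measure))"
    by (simp add: partial_plan_def)
  then have "W_partial p 0 \<mu> \<nu> \<le> 0"
    by (auto dest!: W_partial_le_plan_cost[where p=p] simp: plan_cost_def zero_ereal_def)
  then show ?thesis
    using W_partial_nonneg by (rule antisym)
qed

lemma W_partial_mono:
  assumes "0 \<le> \<beta>'" "\<beta>' \<le> \<beta>" "p > 0"
  shows "W_partial p \<beta>' \<mu> \<nu> \<le> W_partial p \<beta> \<mu> \<nu>"
proof (cases "\<beta> = \<beta>'")
  case False
  then have "\<beta> > 0" and r: "0 \<le> \<beta>' / \<beta>" "\<beta>' / \<beta> \<le> 1"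
    using assms by auto
  have "\<exists>\<gamma>'\<in>{\<gamma>'. partial_plan \<mu> \<nu> \<beta>' \<gamma>'}. plan_cost p \<gamma>' \<le> plan_cost p \<gamma>"
    if plan: "partial_plan \<mu> \<nu> \<beta> \<gamma>" for \<gamma>
  proof
    show "plan_cost p (scale_measure (ennreal (\<beta>' / \<beta>)) \<gamma>) \<le> plan_cost p \<gamma>"
      using plan assms(3) r by (intro plan_cost_scale) (auto simp: partial_plan_def)
    show "scale_measure (ennreal (\<beta>' / \<beta>)) \<gamma> \<in> {\<gamma>'. partial_plan \<mu> \<nu> \<beta>' \<gamma>'}"
      using partial_plan_scale[OF plan r] \<open>\<beta> > 0\<close> by simp
  qed
  then show ?thesis
    unfolding W_partial_def by (intro INF_mono) blast
qed simp

lemma W_partial_one_minus_tv_dist: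
  assumes "borel_prob \<mu>" "borel_prob \<nu>" "p > 0"
  shows "W_partial p (1 - tv_dist \<mu> \<nu>) \<mu> \<nu> = 0"
proof -
  obtain m d where m: "sets m = sets borel"
      "\<And>A. emeasure m A \<le> emeasure \<mu> A" "\<And>A. emeasure m A \<le> emeasure \<nu> A"
      "emeasure m UNIV = ennreal (1 - d)" and d: "d \<le> tv_dist \<mu> \<nu>"
    using borel_prob_common_minorant[OF assms(1,2)] by blast
  have "W_partial p (1 - tv_dist \<mu> \<nu>) \<mu> \<nu> \<le> W_partial p (1 - d) \<mu> \<nu>"
    using d tv_dist_le_1[OF assms(1,2)] assms(3) by (intro W_partial_mono) auto
  also have "\<dots> \<le> plan_cost p (distr m borel (\<lambda>x. (x, x)))"
    using partial_plan_diagonal[OF m] by (rule W_partial_le_plan_cost)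
  also have "\<dots> = 0"
    using plan_cost_diagonal[OF m(1)] .
  finally show ?thesis
    using W_partial_nonneg by (rule antisym)
qed

lemma RPW_le:
  assumes "\<epsilon> \<in> {0..1}" "W_partial p (1 - \<epsilon>) \<mu> \<nu> \<le> ereal (k * \<epsilon>)"
  shows "RPW p k \<mu> \<nu> \<le> \<epsilon>"
  unfolding RPW_def by (rule cInf_lower) (use assms in \<open>auto intro: bdd_belowI[where m=0]\<close>)

lemma RPW_le_1: "k \<ge> 0 \<Longrightarrow> RPW p k \<mu> \<nu> \<le> 1"
  by (rule RPW_le) (simp_all add: W_partial_zero)

lemma RPW_lessD:
  assumes "k \<ge> 0" "RPW p k \<mu> \<nu> < t"
  obtains \<epsilon> where "\<epsilon> \<in> {0..1}" "\<epsilon> < t" "W_partial p (1 - \<epsilon>) \<mu> \<nu> \<le> ereal (k * \<epsilon>)"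
proof -
  have "1 \<in> {\<epsilon> \<in> {0..1}. W_partial p (1 - \<epsilon>) \<mu> \<nu> \<le> ereal (k * \<epsilon>)}"
    using assms(1) by (simp add: W_partial_zero)
  then show ?thesis
    using cInf_lessD[OF _ assms(2)[unfolded RPW_def]] that by blast
qed

lemma RPW_le_tv_dist:
  assumes "borel_prob \<mu>" "borel_prob \<nu>" "p > 0" "k \<ge> 0"
  shows "RPW p k \<mu> \<nu> \<le> tv_dist \<mu> \<nu>"
  using assms tv_dist_nonneg[OF assms(1,2)] tv_dist_le_1[OF assms(1,2)]
  by (intro RPW_le) (simp_all add: W_partial_one_minus_tv_dist)

lemma RPW_le_W_p_divide:
  assumes "p > 0" "k > 0"
  shows "ereal (RPW p k \<mu> \<nu>) \<le> W_p p \<mu> \<nu> / ereal k"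
proof -
  have "ereal (k * RPW p k \<mu> \<nu>) \<le> W_p p \<mu> \<nu>"
  proof (cases "W_p p \<mu> \<nu>")
    case (real w)
    show ?thesis
    proof (cases "w \<le> k")
      case True
      have "w \<ge> 0"
        using W_partial_nonneg[of p 1 \<mu> \<nu>] real by (simp add: W_p_def)
      then have "w / k \<in> {0..1}"
        using True assms(2) by simp
      moreover have "W_partial p (1 - w / k) \<mu> \<nu> \<le> ereal (k * (w / k))"
        using W_partial_mono[of "1 - w / k" 1 p \<mu> \<nu>] \<open>w / k \<in> {0..1}\<close> real assms
        by (simp add: W_p_def)
      ultimately have "RPW p k \<mu> \<nu> \<le> w / k"
        by (rule RPW_le)
      then show ?thesis
        using real assms(2) by (simp add: field_simps)
    next
      case False
      have "k * RPW p k \<mu> \<nu> \<le> k"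
        using RPW_le_1[of k p \<mu> \<nu>] assms(2) mult_left_mono[of "RPW p k \<mu> \<nu>" 1 k] by simp
      then show ?thesis
        using False real by simp
    qed
  qed (use W_partial_nonneg[of p 1 \<mu> \<nu>] in \<open>simp_all add: W_p_def\<close>)
  then show ?thesis
    using assms(2) by (simp add: ereal_le_divide_pos)
qed

lemma RPW_lower_bound:
  assumes "a \<in> {0..1}" "p > 0" "k > 0"
  shows "min (ereal a) (W_partial p (1 - a) \<mu> \<nu> / ereal k) \<le> ereal (RPW p k \<mu> \<nu>)"
proof (cases "ereal (RPW p k \<mu> \<nu>) < ereal a")
  case True
  then show ?thesis
  proof (rule dense_ge_bounded)
    fix w
    assume "ereal (RPW p k \<mu> \<nu>) < w" "w < ereal a"
    then obtain t where w: "w = ereal t" and "RPW p k \<mu> \<nu> < t" "t < a"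
      by (cases w) auto
    then obtain \<epsilon> where \<epsilon>: "\<epsilon> \<in> {0..1}" "\<epsilon> < t" "W_partial p (1 - \<epsilon>) \<mu> \<nu> \<le> ereal (k * \<epsilon>)"
      using RPW_lessD assms(3) by (metis less_imp_le)
    have "W_partial p (1 - a) \<mu> \<nu> \<le> W_partial p (1 - \<epsilon>) \<mu> \<nu>"
      using \<epsilon> \<open>t < a\<close> assms by (intro W_partial_mono) auto
    also have "\<dots> \<le> ereal (k * \<epsilon>)"
      by (fact \<epsilon>(3))
    finally have "W_partial p (1 - a) \<mu> \<nu> / ereal k \<le> ereal t"
      using \<epsilon>(2) assms(3) by (simp add: ereal_divide_le_pos order_trans)
    then show "min (ereal a) (W_partial p (1 - a) \<mu> \<nu> / ereal k) \<le> w"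
      by (simp add: w min.coboundedI2)
  qed
qed (simp add: min.coboundedI1)

theorem lemmaA1:
  fixes \<mu> \<nu> :: "'a::metric_space measure" and p k \<alpha> :: real
  assumes diam: "\<And>x y::'a. dist x y \<le> 1"
    and "borel_prob \<mu>" and "borel_prob \<nu>"
    and "p \<ge> 1" and "k > 0" and "0 < \<alpha>" and "\<alpha> < 1"
  shows "min (ereal (tv_dist \<mu> \<nu> * (1 - \<alpha>)))
             (W_partial p (1 - tv_dist \<mu> \<nu> * (1 - \<alpha>)) \<mu> \<nu> / ereal k)
           \<le> ereal (RPW p k \<mu> \<nu>)
       \<and> ereal (RPW p k \<mu> \<nu>) \<le> min (ereal (tv_dist \<mu> \<nu>)) (W_p p \<mu> \<nu> / ereal k)"
proof -
  have "0 \<le> tv_dist \<mu> \<nu>" "tv_dist \<mu> \<nu> \<le> 1"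
    using tv_dist_nonneg tv_dist_le_1 assms(2,3) by blast+
  then have "tv_dist \<mu> \<nu> * (1 - \<alpha>) \<in> {0..1}"
    using assms(6,7) by (auto intro: mult_le_one)
  moreover have "p > 0"
    using assms(4) by simp
  ultimately show ?thesis
    using RPW_lower_bound[of _ p k \<mu> \<nu>] RPW_le_tv_dist[OF assms(2,3), of p k]
      RPW_le_W_p_divide[of p k \<mu> \<nu>] assms(5) by simp
qed

end
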